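(* Let $\boldsymbol\gamma\in(0,\infty)^B$, $P>0$, and parameters $0<\alpha<\beta$, $\kappa>0$, $a\in\mathbb R$ with $\kappa\log_2\alpha+a=\log_2(1+\alpha)$ and $\kappa(1+\alpha)\le\alpha$. Define \[ I^{\rm ref}(\rho)=\begin{cases}\log_2(1+\rho),&0\le\rho\le\alpha,\\ \kappa\log_2\rho+a,&\alpha<\rho\le\beta,\\ \kappa\log_2\beta+a,&\rho>\beta.\end{cases} \] A solution of maximizing $\sum_{b=1}^B I^{\rm ref}(p_b\gamma_b)$ subject to $\sum_{b=1}^B p_b\le BP$, $p_b\ge0$, is: $p^{\rm ref}_b=\beta/\gamma_b$ for all $b$ if $\frac1B\sum_b\beta/\gamma_b<P$; otherwise \[ p^{\rm ref}_b=\begin{cases}\beta/\gamma_b,&\eta\ge\frac{\beta}{\kappa\gamma_b},\\ \kappa\eta,&\frac{\alpha}{\kappa\gamma_b}\le\eta<\frac{\beta}{\kappa\gamma_b},\\ \alpha/\gamma_b,&\frac{\alpha+1}{\gamma_b}\le\eta<\frac{\alpha}{\kappa\gamma_b},\\ \eta-1/\gamma_b,&\frac1{\gamma_b}\le\eta<\frac{\alpha+1}{\gamma_b},\\ 0,&\text{otherwise},\end{cases} \] for $b=1,\dots,B$, where $\eta$ is chosen such that $\frac1B\sum_{b=1}^B p^{\rm ref}_b=P$.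
   Context: The function $I^{\rm ref}$ is a piecewise approximation (refined truncated water-filling) of a discrete-input mutual information curve; the condition $\kappa(1+\alpha)\le\alpha$ ensures that the slope of $I^{\rm ref}$ does not increase at $\rho=\alpha$. *)

theory Defs
  imports Complex_Main
begin

text \<open>Refined truncated water-filling approximation of the mutual information curve.
  Only evaluated at nonnegative arguments; the first branch is also used for negative rho.\<close>
definition I_ref :: "real \<Rightarrow> real \<Rightarrow> real \<Rightarrow> real \<Rightarrow> real \<Rightarrow> real" where
  "I_ref \<alpha> \<beta> \<kappa> a \<rho> =
     (if \<rho> \<le> \<alpha> then log 2 (1 + \<rho>)
      else if \<rho> \<le> \<beta> then \<kappa> * log 2 \<rho> + a
      else \<kappa> * log 2 \<beta> + a)"

definition feasible :: "nat \<Rightarrow> real \<Rightarrow> (nat \<Rightarrow> real) \<Rightarrow> bool" where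
  "feasible B P p \<longleftrightarrow> (\<forall>b\<in>{1..B}. p b \<ge> 0) \<and> (\<Sum>b=1..B. p b) \<le> real B * P"

definition objective :: "real \<Rightarrow> real \<Rightarrow> real \<Rightarrow> real \<Rightarrow> nat \<Rightarrow> (nat \<Rightarrow> real) \<Rightarrow> (nat \<Rightarrow> real) \<Rightarrow> real" where
  "objective \<alpha> \<beta> \<kappa> a B \<gamma> p = (\<Sum>b=1..B. I_ref \<alpha> \<beta> \<kappa> a (p b * \<gamma> b))"

definition is_optimal :: "real \<Rightarrow> real \<Rightarrow> real \<Rightarrow> real \<Rightarrow> nat \<Rightarrow> real \<Rightarrow> (nat \<Rightarrow> real) \<Rightarrow> (nat \<Rightarrow> real) \<Rightarrow> bool" where
  "is_optimal \<alpha> \<beta> \<kappa> a B P \<gamma> p \<longleftrightarrow>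
     feasible B P p \<and>
     (\<forall>q. feasible B P q \<longrightarrow> objective \<alpha> \<beta> \<kappa> a B \<gamma> q \<le> objective \<alpha> \<beta> \<kappa> a B \<gamma> p)"

definition p_ref_eta :: "real \<Rightarrow> real \<Rightarrow> real \<Rightarrow> real \<Rightarrow> real \<Rightarrow> real" where
  "p_ref_eta \<alpha> \<beta> \<kappa> g \<eta> =
     (if \<eta> \<ge> \<beta> / (\<kappa> * g) then \<beta> / g
      else if \<alpha> / (\<kappa> * g) \<le> \<eta> then \<kappa> * \<eta>
      else if (\<alpha> + 1) / g \<le> \<eta> then \<alpha> / g
      else if 1 / g \<le> \<eta> then \<eta> - 1 / g
      else 0)"

end

theory Submission
  imports Defs
begin

(*
  Measured in nats, the per-channel utility J = ln 2 * I_ref is concave on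
  [0, oo): it is ln(1 + rho) up to the kink alpha, then kappa * ln rho + A up to the cap beta,
  then constant, and kappa * (1 + alpha) <= alpha says that the slope does not increase at
  the kink.  We record this as explicit supergradient (tangent-line) bounds at every point.

  For a normalised water level s = gamma_b * eta the allocation p_ref_eta yields the received
  SNR wf_snr s, and 1/s is a supergradient of J at wf_snr s.  A general Lagrangian lemma
  (sum_le_of_supergradients) then turns these per-channel bounds plus the budget constraint
  into global optimality.  When the budget exceeds the all-cap allocation, that allocation
  maximises every summand separately.  Otherwise the intermediate value theorem applied to
  the continuous total power eta |-> sum_b p_ref_eta gives a water level meeting the budget.
*)

definition I_nats :: "real \<Rightarrow> real \<Rightarrow> real \<Rightarrow> real \<Rightarrow> real \<Rightarrow> real" where
  "I_nats \<alpha> \<beta> \<kappa> A \<rho> =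
     (if \<rho> \<le> \<alpha> then ln (1 + \<rho>) else if \<rho> \<le> \<beta> then \<kappa> * ln \<rho> + A else \<kappa> * ln \<beta> + A)"

lemma I_ref_in_nats: "ln 2 * I_ref \<alpha> \<beta> \<kappa> a \<rho> = I_nats \<alpha> \<beta> \<kappa> (a * ln 2) \<rho>"
  by (simp add: I_ref_def I_nats_def log_def algebra_simps)

text \<open>Received SNR \<open>p_b * \<gamma>_b\<close> of the water-filling allocation at normalised level
  \<open>s = \<gamma>_b * \<eta>\<close>; the min/max form makes continuity in \<open>s\<close> evident.\<close>
definition wf_snr :: "real \<Rightarrow> real \<Rightarrow> real \<Rightarrow> real \<Rightarrow> real" where
  "wf_snr \<alpha> \<beta> \<kappa> s = min \<alpha> (max 0 (s - 1)) + min \<beta> (max \<alpha> (\<kappa> * s)) - \<alpha>"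

lemma sum_le_of_supergradients:
  fixes f :: "'i \<Rightarrow> real \<Rightarrow> real" and p q :: "'i \<Rightarrow> real"
  assumes supergrad: "\<And>b. b \<in> S \<Longrightarrow> f b (q b) \<le> f b (p b) + (q b - p b) / \<eta>"
    and "\<eta> > 0" and budget: "sum q S \<le> sum p S"
  shows "(\<Sum>b\<in>S. f b (q b)) \<le> (\<Sum>b\<in>S. f b (p b))"
proof -
  have "(\<Sum>b\<in>S. f b (q b)) \<le> (\<Sum>b\<in>S. f b (p b) + (q b - p b) / \<eta>)"
    using supergrad by (rule sum_mono)
  also have "\<dots> = (\<Sum>b\<in>S. f b (p b)) + (sum q S - sum p S) / \<eta>"
    by (simp add: sum.distrib sum_divide_distrib[symmetric] sum_subtractf)
  also have "(sum q S - sum p S) / \<eta> \<le> 0"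
    using budget \<open>\<eta> > 0\<close> by (intro divide_nonpos_pos) auto
  finally show ?thesis by simp
qed

locale refined_curve =
  fixes \<alpha> \<beta> \<kappa> a :: real
  assumes alpha_pos: "0 < \<alpha>" and alpha_less_beta: "\<alpha> < \<beta>" and kappa_pos: "\<kappa> > 0"
    and continuous_at_kink: "\<kappa> * log 2 \<alpha> + a = log 2 (1 + \<alpha>)"
    and concave_at_kink: "\<kappa> * (1 + \<alpha>) \<le> \<alpha>"
begin

abbreviation J :: "real \<Rightarrow> real" where "J \<equiv> I_nats \<alpha> \<beta> \<kappa> (a * ln 2)"

lemma kink_value: "\<kappa> * ln \<alpha> + a * ln 2 = ln (1 + \<alpha>)"
proof -
  have "(\<kappa> * log 2 \<alpha> + a) * ln 2 = log 2 (1 + \<alpha>) * ln 2"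
    using continuous_at_kink by simp
  then show ?thesis by (simp add: log_def algebra_simps)
qed

lemma J_mid: "\<alpha> \<le> t \<Longrightarrow> t \<le> \<beta> \<Longrightarrow> J t = \<kappa> * ln t + a * ln 2"
  using kink_value by (cases "t = \<alpha>") (auto simp: I_nats_def)

lemma kink_slopes: "\<kappa> / \<alpha> \<le> 1 / (1 + \<alpha>)"
  using concave_at_kink alpha_pos by (simp add: field_simps)

text \<open>Tangent line of \<open>\<kappa> * ln \<rho> + A\<close> at \<open>t \<in> [\<alpha>, \<beta>]\<close>: it dominates \<open>J\<close> on all of
  \<open>[0, \<infinity>)\<close>, including the \<open>ln (1 + \<rho>)\<close> part thanks to the slope condition at the kink.\<close>
lemma tangent_mid:
  assumes "\<alpha> \<le> t" "t \<le> \<beta>" "0 \<le> \<rho>"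
  shows "J \<rho> \<le> J t + \<kappa> * (\<rho> - t) / t"
proof -
  have t0: "t > 0" using assms alpha_pos by simp
  have tan: "\<kappa> * ln x + a * ln 2 \<le> J t + \<kappa> * (x - t) / t" if "0 < x" for x
    using ln_diff_le[of x t] that t0 kappa_pos mult_left_mono[of "ln x - ln t" "(x-t)/t" \<kappa>]
      J_mid[OF assms(1,2)] by (simp add: algebra_simps)
  show ?thesis
  proof (cases "\<rho> \<le> \<alpha>")
    case True
    have "J \<rho> = ln (1 + \<rho>)" using True by (simp add: I_nats_def)
    also have "\<dots> \<le> ln (1 + \<alpha>) + (\<rho> - \<alpha>) / (1 + \<alpha>)"
      using ln_diff_le[of "1+\<rho>" "1+\<alpha>"] assms alpha_pos by simp
    also have "(\<rho> - \<alpha>) / (1 + \<alpha>) \<le> (\<kappa> / \<alpha>) * (\<rho> - \<alpha>)"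
      using mult_right_mono_neg[OF kink_slopes, of "\<rho> - \<alpha>"] True by simp
    also have "\<dots> \<le> (\<kappa> / t) * (\<rho> - \<alpha>)"
      using True assms alpha_pos kappa_pos by (intro mult_right_mono_neg) (auto simp: field_simps)
    also have "ln (1 + \<alpha>) \<le> J t + \<kappa> * (\<alpha> - t) / t"
      using tan[of \<alpha>] kink_value alpha_pos by simp
    finally show ?thesis by (simp add: diff_divide_distrib right_diff_distrib)
  next
    case False
    show ?thesis
    proof (cases "\<rho> \<le> \<beta>")
      case True then show ?thesis using tan False alpha_pos by (simp add: I_nats_def)
    next
      case above: False
      then have "J \<rho> = \<kappa> * ln \<beta> + a * ln 2" using alpha_less_beta by (simp add: I_nats_def)
      also have "\<dots> \<le> J t + \<kappa> * (\<beta> - t) / t" using tan alpha_pos alpha_less_beta by simp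
      also have "\<dots> \<le> J t + \<kappa> * (\<rho> - t) / t"
        using above t0 kappa_pos by (simp add: divide_right_mono)
      finally show ?thesis .
    qed
  qed
qed

text \<open>The logarithmic segment lies below the tangent of \<open>ln (1 + \<rho>)\<close> at the kink; this is
  exactly where \<open>\<kappa> * (1 + \<alpha>) \<le> \<alpha>\<close> is needed.\<close>
lemma log_segment_below_kink_tangent:
  assumes "\<alpha> < x" "x \<le> \<beta>"
  shows "J x \<le> ln (1 + \<alpha>) + (x - \<alpha>) / (1 + \<alpha>)"
proof -
  have "J x = ln (1 + \<alpha>) + \<kappa> * (ln x - ln \<alpha>)"
    using assms kink_value by (simp add: I_nats_def algebra_simps)
  also have "\<dots> \<le> ln (1 + \<alpha>) + (\<kappa> / \<alpha>) * (x - \<alpha>)"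
    using mult_left_mono[OF ln_diff_le[of x \<alpha>], of \<kappa>] assms alpha_pos kappa_pos by simp
  also have "\<dots> \<le> ln (1 + \<alpha>) + (1 / (1 + \<alpha>)) * (x - \<alpha>)"
    using kink_slopes assms by (intro add_left_mono mult_right_mono) auto
  finally show ?thesis by simp
qed

lemma tangent_low:
  assumes "0 \<le> t" "t \<le> \<alpha>" "0 \<le> \<rho>"
  shows "J \<rho> \<le> J t + (\<rho> - t) / (1 + t)"
proof -
  have Jt: "J t = ln (1 + t)" using assms by (simp add: I_nats_def)
  have tan: "ln (1 + x) \<le> J t + (x - t) / (1 + t)" if "0 \<le> x" for x
    using ln_diff_le[of "1+x" "1+t"] that assms Jt by simp
  have up_to_cap: "J x \<le> J t + (x - t) / (1 + t)" if "0 \<le> x" "x \<le> \<beta>" for x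
  proof (cases "x \<le> \<alpha>")
    case True then show ?thesis using tan that by (simp add: I_nats_def)
  next
    case False
    have "J x \<le> ln (1 + \<alpha>) + (x - \<alpha>) / (1 + \<alpha>)"
      using log_segment_below_kink_tangent False that by simp
    also have "(x - \<alpha>) / (1 + \<alpha>) \<le> (x - \<alpha>) / (1 + t)"
      using False assms by (intro divide_left_mono) auto
    also have "ln (1 + \<alpha>) \<le> J t + (\<alpha> - t) / (1 + t)" using tan alpha_pos by simp
    finally show ?thesis by (simp add: diff_divide_distrib)
  qed
  show ?thesis
  proof (cases "\<rho> \<le> \<beta>")
    case True then show ?thesis using up_to_cap assms by simp
  next
    case False
    then have "J \<rho> = J \<beta>" using alpha_less_beta by (simp add: I_nats_def)
    also have "\<dots> \<le> J t + (\<beta> - t) / (1 + t)" using up_to_cap alpha_pos alpha_less_beta by simp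
    also have "\<dots> \<le> J t + (\<rho> - t) / (1 + t)"
      using False assms by (simp add: divide_right_mono)
    finally show ?thesis .
  qed
qed

lemma supergradient_zero:
  assumes "1 \<le> c" "0 \<le> \<rho>"
  shows "J \<rho> \<le> J 0 + c * (\<rho> - 0)"
  using tangent_low[of 0 \<rho>] alpha_pos assms mult_right_mono[of 1 c \<rho>] by simp

lemma supergradient_kink:
  assumes "\<kappa> / \<alpha> \<le> c" "c \<le> 1 / (1 + \<alpha>)" "0 \<le> \<rho>"
  shows "J \<rho> \<le> J \<alpha> + c * (\<rho> - \<alpha>)"
proof (cases "\<alpha> \<le> \<rho>")
  case True
  have "J \<rho> \<le> J \<alpha> + (\<kappa> / \<alpha>) * (\<rho> - \<alpha>)"
    using tangent_mid[of \<alpha> \<rho>] alpha_less_beta assms by simp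
  also have "\<dots> \<le> J \<alpha> + c * (\<rho> - \<alpha>)"
    using mult_right_mono[OF assms(1), of "\<rho> - \<alpha>"] True by simp
  finally show ?thesis .
next
  case False
  have "J \<rho> \<le> J \<alpha> + (1 / (1 + \<alpha>)) * (\<rho> - \<alpha>)"
    using tangent_low[of \<alpha> \<rho>] alpha_pos assms by simp
  also have "\<dots> \<le> J \<alpha> + c * (\<rho> - \<alpha>)"
    using mult_right_mono_neg[OF assms(2), of "\<rho> - \<alpha>"] False by simp
  finally show ?thesis .
qed

lemma supergradient_cap:
  assumes "0 \<le> c" "c \<le> \<kappa> / \<beta>" "0 \<le> \<rho>"
  shows "J \<rho> \<le> J \<beta> + c * (\<rho> - \<beta>)"
proof (cases "\<beta> \<le> \<rho>")
  case True
  then have "J \<rho> = J \<beta>" using alpha_less_beta by (simp add: I_nats_def)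
  then show ?thesis using True assms by simp
next
  case False
  have "J \<rho> \<le> J \<beta> + (\<kappa> / \<beta>) * (\<rho> - \<beta>)"
    using tangent_mid[of \<beta> \<rho>] alpha_less_beta assms by simp
  also have "\<dots> \<le> J \<beta> + c * (\<rho> - \<beta>)"
    using mult_right_mono_neg[OF assms(2), of "\<rho> - \<beta>"] False by simp
  finally show ?thesis .
qed

text \<open>The five regimes of the water-filling SNR; the slope condition orders the thresholds
  so that \<open>\<alpha> + 1 \<le> \<alpha> / \<kappa>\<close>.\<close>
lemma wf_snr_cases:
  "wf_snr \<alpha> \<beta> \<kappa> s = (if s \<ge> \<beta> / \<kappa> then \<beta> else if \<alpha> / \<kappa> \<le> s then \<kappa> * s
      else if \<alpha> + 1 \<le> s then \<alpha> else if 1 \<le> s then s - 1 else 0)"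
proof -
  have threshold_order: "\<alpha> + 1 \<le> s" if "\<alpha> \<le> \<kappa> * s"
  proof (rule ccontr)
    assume "\<not> ?thesis"
    then have "\<kappa> * s < \<kappa> * (1 + \<alpha>)" using kappa_pos by (intro mult_strict_left_mono) auto
    then show False using concave_at_kink that by linarith
  qed
  show ?thesis
    using alpha_pos alpha_less_beta kappa_pos threshold_order
    by (auto simp: wf_snr_def min_def max_def field_simps)
qed

lemma p_ref_eta_eq_wf_snr:
  assumes "g > 0"
  shows "p_ref_eta \<alpha> \<beta> \<kappa> g \<eta> = wf_snr \<alpha> \<beta> \<kappa> (g * \<eta>) / g"
  using assms kappa_pos unfolding wf_snr_cases p_ref_eta_def by (auto simp: field_simps)

lemma wf_snr_nonneg: "wf_snr \<alpha> \<beta> \<kappa> s \<ge> 0"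
  using alpha_pos alpha_less_beta unfolding wf_snr_def by (auto simp: min_def max_def)

lemma wf_snr_nonpos:
  assumes "s \<le> 0"
  shows "wf_snr \<alpha> \<beta> \<kappa> s = 0"
proof -
  have "\<kappa> * s \<le> 0" using assms kappa_pos by (simp add: mult_nonneg_nonpos)
  then show ?thesis using alpha_pos alpha_less_beta assms by (auto simp: wf_snr_def min_def max_def)
qed

lemma wf_snr_cap: "s \<ge> \<beta> / \<kappa> \<Longrightarrow> wf_snr \<alpha> \<beta> \<kappa> s = \<beta>"
  by (simp add: wf_snr_cases)

lemma wf_snr_supergradient:
  assumes "s > 0" "0 \<le> \<rho>"
  shows "J \<rho> \<le> J (wf_snr \<alpha> \<beta> \<kappa> s) + (\<rho> - wf_snr \<alpha> \<beta> \<kappa> s) / s"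
proof -
  have below_kink: "\<kappa> * s < \<alpha>" if "s < \<alpha> + 1"
    using mult_strict_left_mono[OF that kappa_pos] concave_at_kink by (simp add: algebra_simps)
  consider (cap) "\<beta> / \<kappa> \<le> s" | (log) "\<alpha> / \<kappa> \<le> s" "s < \<beta> / \<kappa>"
    | (kink) "\<alpha> + 1 \<le> s" "s < \<alpha> / \<kappa>" | (low) "1 \<le> s" "s < \<alpha> + 1" | (zero) "s < 1"
    by linarith
  then show ?thesis
  proof cases
    case cap
    then have "1 / s \<le> \<kappa> / \<beta>" using kappa_pos alpha_pos alpha_less_beta assms
      by (simp add: field_simps)
    then show ?thesis using supergradient_cap[of "1/s" \<rho>] cap assms by (simp add: wf_snr_cap)
  next
    case log
    then have "\<alpha> \<le> \<kappa> * s" "\<kappa> * s < \<beta>" using kappa_pos by (auto simp: field_simps)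
    then show ?thesis using tangent_mid[of "\<kappa> * s" \<rho>] log assms kappa_pos
      by (simp add: wf_snr_cases)
  next
    case kink
    have "s < \<beta> / \<kappa>"
      using kink divide_strict_right_mono[OF alpha_less_beta kappa_pos] by linarith
    moreover have "\<kappa> / \<alpha> \<le> 1 / s" "1 / s \<le> 1 / (1 + \<alpha>)"
      using kink kappa_pos alpha_pos by (auto simp: field_simps)
    ultimately show ?thesis using supergradient_kink[of "1/s" \<rho>] kink assms
      by (simp add: wf_snr_cases)
  next
    case low
    then have "s < \<alpha> / \<kappa>" "s < \<beta> / \<kappa>"
      using below_kink kappa_pos alpha_less_beta by (auto simp: field_simps)
    then show ?thesis using tangent_low[of "s - 1" \<rho>] low assms by (simp add: wf_snr_cases)
  next
    case zero
    then have "s < \<alpha> / \<kappa>" "s < \<beta> / \<kappa>"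
      using below_kink alpha_pos kappa_pos alpha_less_beta by (auto simp: field_simps)
    moreover have "1 \<le> 1 / s" using zero assms by simp
    ultimately show ?thesis using supergradient_zero[of "1/s" \<rho>] zero assms alpha_pos
      by (simp add: wf_snr_cases)
  qed
qed

lemma objective_in_nats:
  "objective \<alpha> \<beta> \<kappa> a B \<gamma> q = (\<Sum>b=1..B. J (q b * \<gamma> b)) / ln 2"
proof -
  have "I_ref \<alpha> \<beta> \<kappa> a \<rho> = J \<rho> / ln 2" for \<rho>
    using I_ref_in_nats[of \<alpha> \<beta> \<kappa> a \<rho>] by (simp add: field_simps)
  then show ?thesis unfolding objective_def by (simp add: sum_divide_distrib)
qed

lemma is_optimal_by_nats:
  assumes "feasible B P p"
    and "\<And>q. feasible B P q \<Longrightarrow> (\<Sum>b=1..B. J (q b * \<gamma> b)) \<le> (\<Sum>b=1..B. J (p b * \<gamma> b))"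
  shows "is_optimal \<alpha> \<beta> \<kappa> a B P \<gamma> p"
  using assms unfolding is_optimal_def objective_in_nats by (simp add: divide_right_mono)

lemma cap_allocation_optimal:
  assumes gamma_pos: "\<forall>b\<in>{1..B}. \<gamma> b > 0" and "(\<Sum>b=1..B. \<beta> / \<gamma> b) \<le> real B * P"
  shows "is_optimal \<alpha> \<beta> \<kappa> a B P \<gamma> (\<lambda>b. \<beta> / \<gamma> b)"
proof (rule is_optimal_by_nats)
  show "feasible B P (\<lambda>b. \<beta> / \<gamma> b)"
    using assms alpha_pos alpha_less_beta unfolding feasible_def by auto
  fix q assume q: "feasible B P q"
  have "J (q b * \<gamma> b) \<le> J (\<beta> / \<gamma> b * \<gamma> b)" if b: "b \<in> {1..B}" for b
  proof -
    have "0 \<le> q b * \<gamma> b"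
      using q gamma_pos b unfolding feasible_def by (simp add: less_imp_le)
    then show ?thesis
      using supergradient_cap[of 0 "q b * \<gamma> b"] gamma_pos b kappa_pos alpha_pos alpha_less_beta
      by simp
  qed
  then show "(\<Sum>b=1..B. J (q b * \<gamma> b)) \<le> (\<Sum>b=1..B. J (\<beta> / \<gamma> b * \<gamma> b))"
    by (rule sum_mono)
qed

lemma water_filling_optimal:
  assumes gamma_pos: "\<forall>b\<in>{1..B}. \<gamma> b > 0"
    and spend: "(\<Sum>b=1..B. p_ref_eta \<alpha> \<beta> \<kappa> (\<gamma> b) \<eta>) = real B * P" and "real B * P > 0"
  shows "is_optimal \<alpha> \<beta> \<kappa> a B P \<gamma> (\<lambda>b. p_ref_eta \<alpha> \<beta> \<kappa> (\<gamma> b) \<eta>)"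
proof -
  define p where "p b = p_ref_eta \<alpha> \<beta> \<kappa> (\<gamma> b) \<eta>" for b
  have snr: "p b * \<gamma> b = wf_snr \<alpha> \<beta> \<kappa> (\<gamma> b * \<eta>)" if "b \<in> {1..B}" for b
  proof -
    have "\<gamma> b > 0" using gamma_pos that by simp
    then show ?thesis using p_ref_eta_eq_wf_snr[of "\<gamma> b" \<eta>] unfolding p_def by simp
  qed
  have p_nonneg: "p b \<ge> 0" if "b \<in> {1..B}" for b
  proof -
    have "\<gamma> b > 0" using gamma_pos that by simp
    then show ?thesis
      using p_ref_eta_eq_wf_snr[of "\<gamma> b" \<eta>] wf_snr_nonneg[of "\<gamma> b * \<eta>"] unfolding p_def by simp
  qed
  have eta_pos: "\<eta> > 0"
  proof (rule ccontr)
    assume "\<not> \<eta> > 0"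
    then have "p b = 0" if "b \<in> {1..B}" for b
      using p_ref_eta_eq_wf_snr[of "\<gamma> b" \<eta>] wf_snr_nonpos[of "\<gamma> b * \<eta>"] gamma_pos that
      unfolding p_def by (simp add: mult_nonneg_nonpos)
    then have "(\<Sum>b=1..B. p b) = 0" by simp
    then show False using spend \<open>real B * P > 0\<close> unfolding p_def by linarith
  qed
  show ?thesis unfolding p_def[symmetric]
  proof (rule is_optimal_by_nats)
    show "feasible B P p" using p_nonneg spend unfolding feasible_def p_def by auto
    fix q assume q: "feasible B P q"
    show "(\<Sum>b=1..B. J (q b * \<gamma> b)) \<le> (\<Sum>b=1..B. J (p b * \<gamma> b))"
    proof (rule sum_le_of_supergradients[where f = "\<lambda>b x. J (x * \<gamma> b)" and \<eta> = \<eta>])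
      fix b assume b: "b \<in> {1..B}"
      have gb: "\<gamma> b > 0" "q b \<ge> 0" using gamma_pos q b unfolding feasible_def by auto
      then have "J (q b * \<gamma> b) \<le> J (p b * \<gamma> b) + (q b * \<gamma> b - p b * \<gamma> b) / (\<gamma> b * \<eta>)"
        using wf_snr_supergradient[of "\<gamma> b * \<eta>" "q b * \<gamma> b"] snr[OF b] eta_pos by simp
      also have "(q b * \<gamma> b - p b * \<gamma> b) / (\<gamma> b * \<eta>) = (q b - p b) / \<eta>"
        using gb eta_pos by (simp add: field_simps)
      finally show "J (q b * \<gamma> b) \<le> J (p b * \<gamma> b) + (q b - p b) / \<eta>" .
    qed (use eta_pos q spend in \<open>auto simp: feasible_def p_def\<close>)
  qed
qed

text \<open>A water level meeting any budget up to the all-cap power exists, by the intermediate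
  value theorem for the continuous total power (zero at level 0, all-cap at a large level).\<close>
lemma water_level_exists:
  fixes B :: nat and \<gamma> :: "nat \<Rightarrow> real"
  assumes gamma_pos: "\<forall>b\<in>{1..B}. \<gamma> b > 0" and "0 \<le> c" "c \<le> (\<Sum>b=1..B. \<beta> / \<gamma> b)"
  shows "\<exists>\<eta>. (\<Sum>b=1..B. p_ref_eta \<alpha> \<beta> \<kappa> (\<gamma> b) \<eta>) = c"
proof -
  define F where "F \<eta> = (\<Sum>b=1..B. wf_snr \<alpha> \<beta> \<kappa> (\<gamma> b * \<eta>) / \<gamma> b)" for \<eta>
  define M where "M = (\<Sum>b=1..B. \<beta> / (\<kappa> * \<gamma> b))"
  have level_nonneg: "0 \<le> \<beta> / (\<kappa> * \<gamma> b)" if "b \<in> {1..B}" for b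
    using gamma_pos that kappa_pos alpha_pos alpha_less_beta by (intro divide_nonneg_pos) auto
  have "continuous_on {0..M} F"
    unfolding F_def wf_snr_def using gamma_pos
    by (intro continuous_intros) (metis atLeastAtMost_iff less_irrefl)
  moreover have "F 0 = 0" unfolding F_def by (simp add: wf_snr_nonpos)
  moreover have "F M = (\<Sum>b=1..B. \<beta> / \<gamma> b)"
    unfolding F_def
  proof (rule sum.cong)
    fix b assume b: "b \<in> {1..B}"
    have "\<beta> / (\<kappa> * \<gamma> b) \<le> M"
      unfolding M_def using b level_nonneg by (intro member_le_sum) auto
    then have "\<beta> / \<kappa> \<le> \<gamma> b * M" using gamma_pos b kappa_pos by (simp add: field_simps)
    then show "wf_snr \<alpha> \<beta> \<kappa> (\<gamma> b * M) / \<gamma> b = \<beta> / \<gamma> b" by (simp add: wf_snr_cap)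
  qed simp
  moreover have "0 \<le> M" unfolding M_def using level_nonneg by (intro sum_nonneg) auto
  ultimately obtain \<eta> where "F \<eta> = c" using IVT'[of F 0 c M] assms by auto
  moreover have "(\<Sum>b=1..B. p_ref_eta \<alpha> \<beta> \<kappa> (\<gamma> b) \<eta>) = F \<eta>"
    unfolding F_def using gamma_pos by (intro sum.cong) (auto simp: p_ref_eta_eq_wf_snr)
  ultimately show ?thesis by auto
qed

end

theorem theorem3:
  fixes B :: nat and \<gamma> :: "nat \<Rightarrow> real" and P \<alpha> \<beta> \<kappa> a :: real
  assumes "\<forall>b\<in>{1..B}. \<gamma> b > 0"
    and "P > 0"
    and "0 < \<alpha>" and "\<alpha> < \<beta>" and "\<kappa> > 0"
    and "\<kappa> * log 2 \<alpha> + a = log 2 (1 + \<alpha>)"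
    and "\<kappa> * (1 + \<alpha>) \<le> \<alpha>"
  shows "((\<Sum>b=1..B. \<beta> / \<gamma> b) / real B < P \<longrightarrow>
            is_optimal \<alpha> \<beta> \<kappa> a B P \<gamma> (\<lambda>b. \<beta> / \<gamma> b))
       \<and> (\<not> (\<Sum>b=1..B. \<beta> / \<gamma> b) / real B < P \<longrightarrow>
            (\<exists>\<eta>. (\<Sum>b=1..B. p_ref_eta \<alpha> \<beta> \<kappa> (\<gamma> b) \<eta>) / real B = P)
          \<and> (\<forall>\<eta>. (\<Sum>b=1..B. p_ref_eta \<alpha> \<beta> \<kappa> (\<gamma> b) \<eta>) / real B = P \<longrightarrow>
                 is_optimal \<alpha> \<beta> \<kappa> a B P \<gamma> (\<lambda>b. p_ref_eta \<alpha> \<beta> \<kappa> (\<gamma> b) \<eta>)))"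
proof -
  interpret refined_curve \<alpha> \<beta> \<kappa> a using assms(3-7) by unfold_locales
  have budget_short: "B > 0" "real B * P \<le> (\<Sum>b=1..B. \<beta> / \<gamma> b)"
    if "\<not> (\<Sum>b=1..B. \<beta> / \<gamma> b) / real B < P"
    using that assms(2) by (cases "B = 0"; simp add: field_simps)+
  show ?thesis
  proof (intro conjI impI allI)
    assume "(\<Sum>b=1..B. \<beta> / \<gamma> b) / real B < P"
    then have "(\<Sum>b=1..B. \<beta> / \<gamma> b) \<le> real B * P"
      by (cases "B = 0") (auto simp: field_simps)
    then show "is_optimal \<alpha> \<beta> \<kappa> a B P \<gamma> (\<lambda>b. \<beta> / \<gamma> b)"
      using cap_allocation_optimal assms(1) by blast
  next
    assume "\<not> (\<Sum>b=1..B. \<beta> / \<gamma> b) / real B < P"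
    then show "\<exists>\<eta>. (\<Sum>b=1..B. p_ref_eta \<alpha> \<beta> \<kappa> (\<gamma> b) \<eta>) / real B = P"
      using water_level_exists[OF assms(1), of "real B * P"] budget_short assms(2)
      by (auto simp: field_simps)
  next
    fix \<eta>
    assume "\<not> (\<Sum>b=1..B. \<beta> / \<gamma> b) / real B < P"
      and "(\<Sum>b=1..B. p_ref_eta \<alpha> \<beta> \<kappa> (\<gamma> b) \<eta>) / real B = P"
    then show "is_optimal \<alpha> \<beta> \<kappa> a B P \<gamma> (\<lambda>b. p_ref_eta \<alpha> \<beta> \<kappa> (\<gamma> b) \<eta>)"
      using water_filling_optimal[OF assms(1)] budget_short assms(2) by (simp add: field_simps)
  qed
qed

end
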